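(* Let $\mathcal S$ be an aperiodic primitive qubit spin substitution in $\mathbb Z^m$ with spin matrix $W$ and spin group $G$, with subshift $(\Sigma,\mathbb Z^m,\mu)$. For each $\chi\in\widehat G$ there is a substitutive factor $\mathcal S^{(\chi)}$ over the alphabet $\mathcal A^{(\chi)}=G/\ker(\chi)\times\mathcal D$, namely the qubit spin substitution defined by the matrix $\chi(W)$ (see context), with factor map induced by $g\mathsf d\mapsto(\chi(g),\vec d)$. Moreover, the spectral type of $H^\chi$ is absolutely continuous with respect to the maximal spectral type of (the subshift of) $\mathcal S^{(\chi)}$.
   Context: $Q$ is an expansive endomorphism of $\mathbb Z^m$, $\mathcal D$ a complete set of coset representatives of $\mathbb Z^m/Q\mathbb Z^m$. Spin substitution: finite abelian group $G$, $W:\mathcal D\times\mathcal D\to G$, alphabet $G\times\mathcal D$ with letters $g\mathsf d$, $\mathcal S(g\mathsf d,\vec d')=(gW(\vec d,\vec d'))\mathsf d'$; supertiles obtained by iterating; $\Sigma$ the nonempty set of configurations whose rectangular subpatterns occur in supertiles, with shift $(\mathcal T-\vec j)(\vec x)=\mathcal T(\vec x+\vec j)$ and frequency measure $\mu$; primitive = substitution matrix has a positive power; aperiodic = no element of $\Sigma$ has a nonzero period. $\pi_G(g\mathsf d)=g$, $\pi_{\mathcal D}(g\mathsf d)=\vec d$. Identify $G/\ker\chi$ with the cyclic group $\chi(G)\subset S^1$. The factor substitution $\mathcal S^{(\chi)}$ on $\chi(G)\times\mathcal D$ is $\mathcal S^{(\chi)}((z,\vec d),\vec d')=(z\,\chi(W(\vec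 d,\vec d')),\vec d')$; its factor map sends $\mathcal T$ to the configuration $\vec x\mapsto(\chi(\pi_G(\mathcal T(\vec x))),\pi_{\mathcal D}(\mathcal T(\vec x)))$. $U_{\vec j}f(\mathcal T)=f(\mathcal T-\vec j)$; spectral measures on $\mathbb T^m$ via $\langle U_{\vec j}f,f\rangle=\int z^{\vec j}d\sigma_f$; $f^\chi_{\mathsf d}(\mathcal T)=\chi(\pi_G(\mathcal T(0)))$ if $\pi_{\mathcal D}(\mathcal T(0))=\vec d$, else $0$; $H^\chi$ is the closed linear span of $\{U_{\vec j}f^\chi_{\mathsf d}:\vec j\in\mathbb Z^m,\vec d\in\mathcal D\}$. The maximal spectral type of a system is that of the Koopman representation on its $L^2$ space. *)

theory Defs
  imports "HOL-Analysis.Analysis" "HOL-Probability.Probability"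
begin

definition expansive :: "int ^ 'm ^ 'm \<Rightarrow> bool" where
  "expansive Q \<longleftrightarrow>
     (\<forall>z::complex. det (mat z - (\<chi> i j. complex_of_int (Q $ i $ j))) = 0 \<longrightarrow> 1 < cmod z)"

definition coset_reps :: "int ^ 'm ^ 'm \<Rightarrow> (int ^ 'm) set \<Rightarrow> bool" where
  "coset_reps Q D \<longleftrightarrow> (\<forall>x. \<exists>!d. d \<in> D \<and> (\<exists>y. x = d + Q *v y))"

text \<open>Letters are pairs (g, d). The group is given by a carrier A and an operation gop;
  W maps pairs of digits into the group. The substituted letter at digit d' is
  (g * W(d,d'), d').\<close>

definition subst_letter ::
  "('a \<Rightarrow> 'a \<Rightarrow> 'a) \<Rightarrow> (int ^ 'm \<Rightarrow> int ^ 'm \<Rightarrow> 'a) \<Rightarrow> 'a \<times> (int ^ 'm) \<Rightarrow> int ^ 'm \<Rightarrow> 'a \<times> (int ^ 'm)" where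
  "subst_letter gop W l d' = (gop (fst l) (W (snd l) d'), d')"

text \<open>Substitution applied to a (partial) patch: position Q x + d' gets S(P x, d').\<close>
definition subst_patch ::
  "int ^ 'm ^ 'm \<Rightarrow> (int ^ 'm) set \<Rightarrow> ('a \<Rightarrow> 'a \<Rightarrow> 'a) \<Rightarrow> (int ^ 'm \<Rightarrow> int ^ 'm \<Rightarrow> 'a)
    \<Rightarrow> (int ^ 'm \<Rightarrow> ('a \<times> (int ^ 'm)) option) \<Rightarrow> (int ^ 'm \<Rightarrow> ('a \<times> (int ^ 'm)) option)" where
  "subst_patch Q D gop W P y =
     (if \<exists>x d'. d' \<in> D \<and> y = Q *v x + d' \<and> P x \<noteq> None
      then (let xd = (SOME xd. snd xd \<in> D \<and> y = Q *v fst xd + snd xd \<and> P (fst xd) \<noteq> None)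
            in Some (subst_letter gop W (the (P (fst xd))) (snd xd)))
      else None)"

definition supertile ::
  "int ^ 'm ^ 'm \<Rightarrow> (int ^ 'm) set \<Rightarrow> ('a \<Rightarrow> 'a \<Rightarrow> 'a) \<Rightarrow> (int ^ 'm \<Rightarrow> int ^ 'm \<Rightarrow> 'a)
    \<Rightarrow> nat \<Rightarrow> 'a \<times> (int ^ 'm) \<Rightarrow> (int ^ 'm \<Rightarrow> ('a \<times> (int ^ 'm)) option)" where
  "supertile Q D gop W n l = (subst_patch Q D gop W ^^ n) (\<lambda>x. if x = 0 then Some l else None)"

definition rect :: "int ^ 'm \<Rightarrow> int ^ 'm \<Rightarrow> (int ^ 'm) set" where
  "rect a b = {x. \<forall>i. a $ i \<le> x $ i \<and> x $ i \<le> b $ i}"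

definition subshift ::
  "int ^ 'm ^ 'm \<Rightarrow> (int ^ 'm) set \<Rightarrow> ('a \<Rightarrow> 'a \<Rightarrow> 'a) \<Rightarrow> (int ^ 'm \<Rightarrow> int ^ 'm \<Rightarrow> 'a) \<Rightarrow> 'a set
    \<Rightarrow> (int ^ 'm \<Rightarrow> 'a \<times> (int ^ 'm)) set" where
  "subshift Q D gop W A =
     {T. \<forall>a b. \<exists>n l k. l \<in> A \<times> D \<and>
          (\<forall>x \<in> rect a b. supertile Q D gop W n l (x + k) = Some (T x))}"

text \<open>Shift: (T - j)(x) = T(x + j).\<close>
definition shift :: "int ^ 'm \<Rightarrow> (int ^ 'm \<Rightarrow> 'b) \<Rightarrow> (int ^ 'm \<Rightarrow> 'b)" where
  "shift j T = (\<lambda>x. T (x + j))"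

definition subst_matrix ::
  "(int ^ 'm) set \<Rightarrow> ('a \<Rightarrow> 'a \<Rightarrow> 'a) \<Rightarrow> (int ^ 'm \<Rightarrow> int ^ 'm \<Rightarrow> 'a)
    \<Rightarrow> 'a \<times> (int ^ 'm) \<Rightarrow> 'a \<times> (int ^ 'm) \<Rightarrow> nat" where
  "subst_matrix D gop W l l' = card {d' \<in> D. subst_letter gop W l' d' = l}"

fun matpow :: "'l set \<Rightarrow> ('l \<Rightarrow> 'l \<Rightarrow> nat) \<Rightarrow> nat \<Rightarrow> 'l \<Rightarrow> 'l \<Rightarrow> nat" where
  "matpow Alph M 0 l l' = (if l = l' then 1 else 0)"
| "matpow Alph M (Suc k) l l' = (\<Sum>c\<in>Alph. M l c * matpow Alph M k c l')"

definition primitive ::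
  "(int ^ 'm) set \<Rightarrow> ('a \<Rightarrow> 'a \<Rightarrow> 'a) \<Rightarrow> (int ^ 'm \<Rightarrow> int ^ 'm \<Rightarrow> 'a) \<Rightarrow> 'a set \<Rightarrow> bool" where
  "primitive D gop W A \<longleftrightarrow>
     (\<exists>k>0. \<forall>l \<in> A \<times> D. \<forall>l' \<in> A \<times> D. matpow (A \<times> D) (subst_matrix D gop W) k l l' > 0)"

definition aperiodic_set :: "(int ^ 'm \<Rightarrow> 'b) set \<Rightarrow> bool" where
  "aperiodic_set Sig \<longleftrightarrow> (\<forall>T \<in> Sig. \<forall>j. j \<noteq> 0 \<longrightarrow> shift j T \<noteq> T)"

definition cyl_sigma :: "(int ^ 'm \<Rightarrow> 'b) measure" where
  "cyl_sigma = sigma UNIV {{T. T x = a} | x a. True}"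

definition box :: "nat \<Rightarrow> (int ^ 'm) set" where
  "box N = {j. \<forall>i. \<bar>j $ i\<bar> \<le> int N}"

definition is_freq_measure :: "(int ^ 'm \<Rightarrow> 'b) set \<Rightarrow> (int ^ 'm \<Rightarrow> 'b) measure \<Rightarrow> bool" where
  "is_freq_measure Sig \<mu> \<longleftrightarrow>
     sets \<mu> = sets cyl_sigma \<and> prob_space \<mu> \<and> (AE T in \<mu>. T \<in> Sig) \<and>
     (\<forall>F p T. finite F \<longrightarrow> T \<in> Sig \<longrightarrow>
        (\<lambda>N. real (card {j \<in> box N. \<forall>x \<in> F. T (x + j) = p x}) / real (card (box N :: (int ^ 'm) set)))
          \<longlonglongrightarrow> measure \<mu> {T. \<forall>x \<in> F. T x = p x})"

definition L2 :: "'c measure \<Rightarrow> ('c \<Rightarrow> complex) \<Rightarrow> bool" where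
  "L2 \<mu> f \<longleftrightarrow> f \<in> borel_measurable \<mu> \<and> integrable \<mu> (\<lambda>x. (cmod (f x))\<^sup>2)"

definition torus :: "(complex ^ 'm) set" where
  "torus = {z. \<forall>i. cmod (z $ i) = 1}"

definition zpow :: "complex ^ 'm \<Rightarrow> int ^ 'm \<Rightarrow> complex" where
  "zpow z j = (\<Prod>i\<in>UNIV. (z $ i) powi (j $ i))"

text \<open>Spectral measure of f for the Koopman representation U_j f(T) = f(T - j):
  a finite Borel measure on the torus with <U_j f, f> = \<integral> z^j d\<sigma>.\<close>
definition spectral_measure ::
  "(int ^ 'm \<Rightarrow> 'b) measure \<Rightarrow> ((int ^ 'm \<Rightarrow> 'b) \<Rightarrow> complex) \<Rightarrow> (complex ^ 'm) measure \<Rightarrow> bool" where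
  "spectral_measure \<mu> f \<sigma> \<longleftrightarrow>
     sets \<sigma> = sets borel \<and> finite_measure \<sigma> \<and> emeasure \<sigma> (UNIV - torus) = 0 \<and>
     (\<forall>j. (\<integral>T. f (shift j T) * cnj (f T) \<partial>\<mu>) = (\<integral>z. zpow z j \<partial>\<sigma>))"

definition max_spectral_type ::
  "(int ^ 'm \<Rightarrow> 'b) measure \<Rightarrow> (complex ^ 'm) measure \<Rightarrow> bool" where
  "max_spectral_type \<mu> \<nu> \<longleftrightarrow>
     sets \<nu> = sets borel \<and>
     (\<forall>g \<sigma>. L2 \<mu> g \<longrightarrow> spectral_measure \<mu> g \<sigma> \<longrightarrow> absolutely_continuous \<nu> \<sigma>) \<and>
     (\<exists>g \<sigma>. L2 \<mu> g \<and> spectral_measure \<mu> g \<sigma> \<and> absolutely_continuous \<sigma> \<nu>)"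

definition fchi :: "('g \<Rightarrow> complex) \<Rightarrow> int ^ 'm \<Rightarrow> (int ^ 'm \<Rightarrow> 'g \<times> (int ^ 'm)) \<Rightarrow> complex" where
  "fchi chr d T = (if snd (T 0) = d then chr (fst (T 0)) else 0)"

text \<open>H^chi: closed linear span (in L2(\<mu>)) of the functions U_j f^chi_d.\<close>
definition Hchi ::
  "(int ^ 'm \<Rightarrow> 'g \<times> (int ^ 'm)) measure \<Rightarrow> ('g \<Rightarrow> complex) \<Rightarrow> (int ^ 'm) set
     \<Rightarrow> ((int ^ 'm \<Rightarrow> 'g \<times> (int ^ 'm)) \<Rightarrow> complex) set" where
  "Hchi \<mu> chr D = {f. L2 \<mu> f \<and>
     (\<forall>e>0. \<exists>S c. finite S \<and> S \<subseteq> UNIV \<times> D \<and>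
        (\<integral>T. (cmod (f T - (\<Sum>jd\<in>S. c jd * fchi chr (snd jd) (shift (fst jd) T))))\<^sup>2 \<partial>\<mu>) < e)}"

definition character :: "('g::ab_group_add \<Rightarrow> complex) \<Rightarrow> bool" where
  "character chr \<longleftrightarrow> (\<forall>g h. chr (g + h) = chr g * chr h) \<and> (\<forall>g. cmod (chr g) = 1)"

definition factor_map ::
  "('g \<Rightarrow> complex) \<Rightarrow> (int ^ 'm \<Rightarrow> 'g \<times> (int ^ 'm)) \<Rightarrow> (int ^ 'm \<Rightarrow> complex \<times> (int ^ 'm))" where
  "factor_map chr T = (\<lambda>x. (chr (fst (T x)), snd (T x)))"

end

theory Submission
  imports Defs "HOL-Real_Asymp.Real_Asymp"
begin

text \<open>Since \<open>\<chi>\<close> is a homomorphism, the letter map \<open>(g, d) \<mapsto> (\<chi> g, d)\<close> intertwines the two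
  substitutions, so it sends supertiles to supertiles and the subshift into the factor subshift.
  It is onto by compactness: every window of a factor configuration has finitely many lifts
  occurring in supertiles (the fibres of the letter map are finite), and Koenig's lemma
  glues compatible lifts of growing boxes. The same finiteness makes the frequency of a factor
  patch the finite sum of the frequencies of its lifts, so the push-forward of \<open>\<mu>\<close> is the
  frequency measure of the factor.

  Each \<open>U\<^sub>j f\<^sup>\<chi>\<^sub>d\<close> is a function of the factor configuration, so every \<open>f \<in> H\<^sup>\<chi>\<close> is one
  almost everywhere (an \<open>L\<^sup>2\<close>-approximating sequence has an a.e. convergent subsequence).
  Frequency measures are shift invariant, hence the spectral measure of \<open>f\<close> is a spectral
  measure of an \<open>L\<^sup>2\<close> function on the factor, and is dominated by its maximal spectral type.\<close>

section \<open>Boxes\<close>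

lemma box_eq_vec_interval: "box N = {x :: int ^ 'm. \<forall>i. x $ i \<in> {- int N..int N}}"
proof -
  have "\<bar>t\<bar> \<le> int N \<longleftrightarrow> t \<in> {- int N..int N}" for t :: int
    by auto
  then show ?thesis
    by (simp add: box_def)
qed

lemma bij_betw_vec_nth_box:
  "bij_betw vec_nth (box N :: (int ^ 'm) set) (PiE UNIV (\<lambda>_. {- int N..int N}))"
  unfolding box_eq_vec_interval by (intro bij_betwI[of _ _ _ vec_lambda]) (auto simp: vec_eq_iff)

lemma finite_box [simp]: "finite (box N :: (int ^ 'm) set)"
  using bij_betw_finite[OF bij_betw_vec_nth_box] by (simp add: finite_PiE)

lemma card_box: "card (box N :: (int ^ 'm) set) = (2 * N + 1) ^ CARD('m)"
proof -
  have "card (box N :: (int ^ 'm) set) = card (PiE (UNIV :: 'm set) (\<lambda>_. {- int N..int N}))"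
    by (rule bij_betw_same_card[OF bij_betw_vec_nth_box])
  also have "\<dots> = (2 * N + 1) ^ CARD('m)"
    by (simp add: card_PiE nat_add_distrib nat_mult_distrib)
  finally show ?thesis .
qed

lemma box_mono: "N \<le> M \<Longrightarrow> box N \<subseteq> box M"
  by (auto simp: box_def) (meson of_nat_le_iff order_trans)

lemma ex_in_box: "\<exists>N. x \<in> box N"
proof
  have "\<bar>x $ i\<bar> \<le> (\<Sum>k\<in>UNIV. \<bar>x $ k\<bar>)" for i
    by (rule member_le_sum) auto
  then show "x \<in> box (nat (\<Sum>k\<in>UNIV. \<bar>x $ k\<bar>))"
    by (auto simp: box_def)
qed

lemma box_eq_rect: "box N = rect (\<chi> i. - int N) (\<chi> i. int N)"
  by (simp add: box_eq_vec_interval rect_def)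

lemma rect_subset_box: "\<exists>N. rect a b \<subseteq> box N"
proof -
  obtain Na Nb where "a \<in> box Na" "b \<in> box Nb"
    using ex_in_box by blast
  then have ab: "a \<in> box (max Na Nb)" "b \<in> box (max Na Nb)"
    using box_mono[of Na "max Na Nb"] box_mono[of Nb "max Na Nb"] by auto
  have "rect a b \<subseteq> box (max Na Nb)"
  proof
    fix x
    assume "x \<in> rect a b"
    then have "a $ i \<le> x $ i" "x $ i \<le> b $ i" for i
      by (auto simp: rect_def)
    moreover have "\<bar>a $ i\<bar> \<le> int (max Na Nb)" "\<bar>b $ i\<bar> \<le> int (max Na Nb)" for i
      using ab by (auto simp: box_def)
    ultimately show "x \<in> box (max Na Nb)"
      unfolding box_def by (smt (verit) mem_Collect_eq)
  qed
  then show ?thesis ..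
qed

lemma finite_rect [simp]: "finite (rect a b :: (int ^ 'm) set)"
  using rect_subset_box[of a b] finite_subset by (metis finite_box)

lemma card_filter_subset_bounds:
  assumes "finite S" "Z \<subseteq> S"
  shows "card {i\<in>Z. P i} \<le> card {i\<in>S. P i}"
    and "card {i\<in>S. P i} \<le> card {i\<in>Z. P i} + (card S - card Z)"
proof -
  have "finite Z"
    using assms finite_subset by blast
  show "card {i\<in>Z. P i} \<le> card {i\<in>S. P i}"
    using assms by (intro card_mono) auto
  have "card {i\<in>S. P i} \<le> card ({i\<in>Z. P i} \<union> (S - Z))"
    using assms \<open>finite Z\<close> by (intro card_mono) auto
  also have "\<dots> \<le> card {i\<in>Z. P i} + card (S - Z)"
    by (rule card_Un_le)
  also have "card (S - Z) = card S - card Z"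
    using assms \<open>finite Z\<close> by (simp add: card_Diff_subset)
  finally show "card {i\<in>S. P i} \<le> card {i\<in>Z. P i} + (card S - card Z)" .
qed

lemma card_box_translate_diff:
  fixes j :: "int ^ 'm"
  assumes j: "j \<in> box c" and c: "c \<le> N"
  shows "\<bar>real (card {i\<in>box N. P (i + j)}) - real (card {i\<in>box N. P i})\<bar>
          \<le> real (card (box N :: (int ^ 'm) set)) - real (card (box (N - c) :: (int ^ 'm) set))"
proof -
  let ?X = "box N :: (int ^ 'm) set" and ?Z = "box (N - c) :: (int ^ 'm) set"
  let ?Y = "(\<lambda>i. i + j) ` ?X"
  have inj: "inj (\<lambda>i::int ^ 'm. i + j)"
    by (intro injI) simp
  have card_Y: "card ?Y = card ?X"
    using inj by (simp add: card_image inj_on_def)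
  have "{i\<in>?Y. P i} = (\<lambda>i. i + j) ` {i\<in>?X. P (i + j)}"
    by auto
  then have card_shifted: "card {i\<in>?X. P (i + j)} = card {i\<in>?Y. P i}"
    using inj by (simp add: card_image inj_on_def)
  have ZX: "?Z \<subseteq> ?X"
    by (rule box_mono) simp
  have ZY: "?Z \<subseteq> ?Y"
  proof
    fix i
    assume "i \<in> ?Z"
    then have "i - j \<in> ?X"
      using j c by (auto simp: box_def abs_le_iff) (smt (verit))+
    then show "i \<in> ?Y"
      by (intro image_eqI[of _ _ "i - j"]) simp_all
  qed
  have "card ?Z \<le> card ?X"
    using ZX by (intro card_mono) simp_all
  then show ?thesis
    unfolding card_shifted
    using card_filter_subset_bounds[OF finite_box ZX, of P]
      card_filter_subset_bounds[OF finite_imageI[OF finite_box] ZY, of P] card_Y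
    by simp linarith
qed

lemma box_boundary_ratio_tendsto_0:
  "(\<lambda>N. (real (card (box N :: (int ^ 'm) set)) - real (card (box (N - c) :: (int ^ 'm) set)))
          / real (card (box N :: (int ^ 'm) set))) \<longlonglongrightarrow> 0"
proof -
  let ?m = "CARD('m)"
  have "(\<lambda>N. 1 - 2 * real c / (2 * real N + 1)) \<longlonglongrightarrow> 1"
    by real_asymp
  then have "(\<lambda>N. 1 - (1 - 2 * real c / (2 * real N + 1)) ^ ?m) \<longlonglongrightarrow> 1 - 1 ^ ?m"
    by (intro tendsto_intros)
  then have "(\<lambda>N. 1 - (1 - 2 * real c / (2 * real N + 1)) ^ ?m) \<longlonglongrightarrow> 0"
    by simp
  moreover have "1 - (1 - 2 * real c / (2 * real N + 1)) ^ ?m =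
     (real (card (box N :: (int ^ 'm) set)) - real (card (box (N - c) :: (int ^ 'm) set)))
          / real (card (box N :: (int ^ 'm) set))" if "c \<le> N" for N
  proof -
    have "1 - 2 * real c / (2 * real N + 1) = real (2 * (N - c) + 1) / real (2 * N + 1)"
      using that by (simp add: field_simps)
    then show ?thesis
      by (simp add: card_box power_divide diff_divide_distrib)
  qed
  ultimately show ?thesis
    by (rule Lim_transform_eventually[OF _ eventually_mono[OF eventually_ge_at_top[of c]]])
qed

lemma box_translate_freq_diff_tendsto_0:
  fixes j :: "int ^ 'm"
  shows "(\<lambda>N. real (card {i\<in>box N. P (i + j)}) / real (card (box N :: (int ^ 'm) set))
            - real (card {i\<in>box N. P i}) / real (card (box N :: (int ^ 'm) set))) \<longlonglongrightarrow> 0"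
proof -
  obtain c where "j \<in> box c"
    using ex_in_box by blast
  show ?thesis
  proof (rule Lim_null_comparison[OF _ box_boundary_ratio_tendsto_0])
    show "\<forall>\<^sub>F N in sequentially.
        norm (real (card {i\<in>box N. P (i + j)}) / real (card (box N :: (int ^ 'm) set))
            - real (card {i\<in>box N. P i}) / real (card (box N :: (int ^ 'm) set)))
        \<le> (real (card (box N :: (int ^ 'm) set)) - real (card (box (N - c) :: (int ^ 'm) set)))
            / real (card (box N :: (int ^ 'm) set))"
      using eventually_ge_at_top[of c]
    proof eventually_elim
      case (elim N)
      show ?case
        using divide_right_mono[OF card_box_translate_diff[OF \<open>j \<in> box c\<close> elim, of P]]
        by (simp flip: diff_divide_distrib)
    qed
  qed
qed

section \<open>Koenig's lemma\<close>

lemma restrict_restrict_mono: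
  assumes "mono B" "N \<le> M"
  shows "restrict (restrict f (B M)) (B N) = restrict f (B N)"
  using monoD[OF assms] by (simp add: Int_absorb1)

lemma restrict_chain_limit:
  fixes s :: "nat \<Rightarrow> 'a \<Rightarrow> 'b"
  assumes B: "mono B" and s_Suc: "\<And>N. restrict (s (Suc N)) (B N) = s N"
  shows "\<exists>t. \<forall>N. restrict t (B N) = s N"
proof -
  have s_compat: "restrict (s M) (B N) = s N" if "N \<le> M" for N M
    using that
  proof (induction M rule: dec_induct)
    case base
    show ?case
      using restrict_restrict_mono[OF B order_refl, of "s (Suc N)" N] by (simp only: s_Suc)
  next
    case (step M)
    have "restrict (s (Suc M)) (B N) = restrict (restrict (s (Suc M)) (B M)) (B N)"
      by (rule restrict_restrict_mono[OF B step.hyps(1), symmetric])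
    also have "\<dots> = s N"
      by (simp only: s_Suc step.IH)
    finally show ?case .
  qed
  define t where "t x = s (LEAST N. x \<in> B N) x" for x
  have "restrict t (B N) = s N" for N
  proof
    fix x
    show "restrict t (B N) x = s N x"
    proof (cases "x \<in> B N")
      case True
      let ?k = "LEAST N. x \<in> B N"
      have "?k \<le> N" "x \<in> B ?k"
        using True by (auto intro: Least_le LeastI)
      then have "s N x = s ?k x"
        using s_compat[of ?k N] by (metis restrict_apply')
      with True show ?thesis
        by (simp add: t_def)
    next
      case False
      then show ?thesis
        using s_Suc[of N] by (metis restrict_apply)
    qed
  qed
  then show ?thesis
    by blast
qed

text \<open>Some candidate in \<open>C\<close> is hit for infinitely many \<open>M\<close>, hence, restriction being
  closed downwards, for all \<open>M \<ge> N\<close>.\<close>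
lemma koenig_pigeonhole:
  fixes L :: "nat \<Rightarrow> ('a \<Rightarrow> 'b) set"
  assumes B: "mono B" and restrict: "\<And>N M q. N \<le> M \<Longrightarrow> q \<in> L M \<Longrightarrow> restrict q (B N) \<in> L N"
    and C: "finite C" and hits: "\<And>M. M \<ge> N \<Longrightarrow> \<exists>q'\<in>L M. restrict q' (B N) \<in> C"
  shows "\<exists>q\<in>C. \<forall>M\<ge>N. \<exists>q'\<in>L M. restrict q' (B N) = q"
proof -
  have "\<forall>M\<in>{N..}. \<exists>q\<in>C. \<exists>q'\<in>L M. restrict q' (B N) = q"
    using hits by fastforce
  from pigeonhole_infinite_rel[OF infinite_Ici C this]
  obtain q where q: "q \<in> C" and inf: "infinite {M\<in>{N..}. \<exists>q'\<in>L M. restrict q' (B N) = q}"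
    by blast
  have "\<exists>q'\<in>L M. restrict q' (B N) = q" if "M \<ge> N" for M
  proof -
    have "\<exists>M'\<ge>M. M' \<in> {M\<in>{N..}. \<exists>q'\<in>L M. restrict q' (B N) = q}"
      using inf by (simp only: infinite_nat_iff_unbounded_le)
    then obtain M' q' where "M' \<ge> M" "q' \<in> L M'" "restrict q' (B N) = q"
      by blast
    then have "restrict q' (B M) \<in> L M"
      using restrict by blast
    moreover have "restrict (restrict q' (B M)) (B N) = q"
      unfolding restrict_restrict_mono[OF B \<open>N \<le> M\<close>] by fact
    ultimately show ?thesis
      by blast
  qed
  with q show ?thesis
    by blast
qed

lemma koenig_restrict:
  fixes L :: "nat \<Rightarrow> ('a \<Rightarrow> 'b) set" and B :: "nat \<Rightarrow> 'a set"
  assumes B: "mono B"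
    and finite: "\<And>N. finite (L N)" and nonempty: "\<And>N. L N \<noteq> {}"
    and restrict: "\<And>N M q. N \<le> M \<Longrightarrow> q \<in> L M \<Longrightarrow> restrict q (B N) \<in> L N"
  shows "\<exists>t. \<forall>N. restrict t (B N) \<in> L N"
proof -
  define extends where "extends N q \<longleftrightarrow> (\<forall>M\<ge>N. \<exists>q'\<in>L M. restrict q' (B N) = q)" for N q
  have pick: "\<exists>q\<in>C. extends N q"
    if "finite C" "\<And>M. M \<ge> N \<Longrightarrow> \<exists>q'\<in>L M. restrict q' (B N) \<in> C" for C N
    using koenig_pigeonhole[of B L, OF B restrict that] unfolding extends_def .
  have "\<exists>q'\<in>L M. restrict q' (B 0) \<in> L 0" for M
    using nonempty[of M] restrict[of 0 M] by blast
  then have "\<exists>q. q \<in> L 0 \<and> extends 0 q"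
    using pick[OF finite] by blast
  moreover have "\<exists>q'. (q' \<in> L (Suc N) \<and> extends (Suc N) q') \<and> restrict q' (B N) = q"
    if "q \<in> L N \<and> extends N q" for N q
  proof -
    let ?C = "{q' \<in> L (Suc N). restrict q' (B N) = q}"
    have "\<exists>q'\<in>L M. restrict q' (B (Suc N)) \<in> ?C" if "M \<ge> Suc N" for M
    proof -
      have "M \<ge> N"
        using \<open>M \<ge> Suc N\<close> by simp
      then obtain q' where "q' \<in> L M" "restrict q' (B N) = q"
        using \<open>q \<in> L N \<and> extends N q\<close> unfolding extends_def by blast
      moreover have "restrict (restrict q' (B (Suc N))) (B N) = restrict q' (B N)"
        by (rule restrict_restrict_mono[OF B]) simp
      ultimately have "restrict q' (B (Suc N)) \<in> ?C"
        using restrict[OF \<open>M \<ge> Suc N\<close>] by simp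
      with \<open>q' \<in> L M\<close> show ?thesis
        by blast
    qed
    then show ?thesis
      using pick[of ?C "Suc N"] finite by auto
  qed
  ultimately have "\<exists>s. \<forall>N. (s N \<in> L N \<and> extends N (s N)) \<and> restrict (s (Suc N)) (B N) = s N"
    by (rule dependent_nat_choice)
  then obtain s where s: "\<And>N. s N \<in> L N" and s_Suc: "\<And>N. restrict (s (Suc N)) (B N) = s N"
    by blast
  from restrict_chain_limit[of B s, OF B s_Suc] obtain t where "\<And>N. restrict t (B N) = s N"
    by blast
  with s show ?thesis
    by (intro exI[of _ t]) simp
qed

section \<open>Cylinders\<close>

definition cylinder :: "'a set \<Rightarrow> ('a \<Rightarrow> 'b) \<Rightarrow> ('a \<Rightarrow> 'b) set" where
  "cylinder F p = {T. \<forall>x\<in>F. T x = p x}"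

lemma space_cyl_sigma [simp]: "space cyl_sigma = UNIV"
  by (simp add: cyl_sigma_def)

lemma UNIV_in_cyl_sigma [simp]: "UNIV \<in> sets cyl_sigma"
  using sets.top[of cyl_sigma] by simp

lemma sets_cyl_sigma: "sets cyl_sigma = sigma_sets UNIV {{T. T x = a} | x a. True}"
  by (simp add: cyl_sigma_def)

lemma coordinate_set_in_cyl_sigma [measurable]: "{T. T x = a} \<in> sets cyl_sigma"
  unfolding sets_cyl_sigma by (rule sigma_sets.Basic) blast

lemma cylinder_in_cyl_sigma [measurable]: "finite F \<Longrightarrow> cylinder F p \<in> sets cyl_sigma"
proof (induction F rule: finite_induct)
  case empty
  then show ?case
    by (simp add: cylinder_def)
next
  case (insert x F)
  have "cylinder (insert x F) p = {T. T x = p x} \<inter> cylinder F p"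
    by (auto simp: cylinder_def)
  then show ?case
    using insert.IH by auto
qed

lemma measurable_cyl_sigmaI:
  assumes "\<And>x a. f -` {T. T x = a} \<in> sets cyl_sigma"
  shows "f \<in> measurable cyl_sigma cyl_sigma"
proof -
  have "f \<in> measurable cyl_sigma (sigma UNIV {{T. T x = a} | x a. True})"
    using assms by (intro measurable_measure_of) auto
  then show ?thesis
    unfolding cyl_sigma_def[symmetric] .
qed

lemma measurable_shift [measurable]:
  "(shift j :: (int ^ 'm \<Rightarrow> 'b) \<Rightarrow> _) \<in> measurable cyl_sigma cyl_sigma"
proof (rule measurable_cyl_sigmaI)
  fix x :: "int ^ 'm" and a :: 'b
  have "shift j -` {T. T x = a} = {T. T (x + j) = a}"
    by (auto simp: shift_def)
  then show "shift j -` {T. T x = a} \<in> sets cyl_sigma"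
    by simp
qed

lemma shift_shift: "shift j (shift i T) = shift (i + j) T"
  by (simp add: shift_def ac_simps)

lemma vimage_shift_cylinder: "shift j -` cylinder F p = cylinder ((\<lambda>x. x + j) ` F) (\<lambda>y. p (y - j))"
  by (auto simp: shift_def cylinder_def)

definition finite_cylinders :: "('a \<Rightarrow> 'b) set set" where
  "finite_cylinders = insert {} {cylinder F p | F p. finite F}"

lemma Int_stable_finite_cylinders: "Int_stable finite_cylinders"
proof (rule Int_stableI)
  fix C1 C2 :: "('a \<Rightarrow> 'b) set"
  assume "C1 \<in> finite_cylinders" "C2 \<in> finite_cylinders"
  show "C1 \<inter> C2 \<in> finite_cylinders"
  proof (cases "C1 \<inter> C2 = {}")
    case False
    with \<open>C1 \<in> finite_cylinders\<close> \<open>C2 \<in> finite_cylinders\<close>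
    obtain F p G q where F: "finite F" "C1 = cylinder F p" and G: "finite G" "C2 = cylinder G q"
      unfolding finite_cylinders_def by blast
    with False have "\<forall>x\<in>F \<inter> G. p x = q x"
      by (auto simp: cylinder_def)
    then have "C1 \<inter> C2 = cylinder (F \<union> G) (\<lambda>x. if x \<in> F then p x else q x)"
      using F G by (auto simp: cylinder_def)
    with F G show ?thesis
      unfolding finite_cylinders_def by blast
  qed (simp add: finite_cylinders_def)
qed

lemma sets_cyl_sigma_finite_cylinders:
  "sets (cyl_sigma :: (int ^ 'm \<Rightarrow> 'b) measure) = sigma_sets UNIV finite_cylinders"
  unfolding sets_cyl_sigma
proof (rule sigma_sets_eqI)
  fix C :: "(int ^ 'm \<Rightarrow> 'b) set"
  assume "C \<in> {{T. T x = a} | x a. True}"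
  then obtain x a where "C = cylinder {x} (\<lambda>_. a)"
    by (auto simp: cylinder_def)
  then have "C \<in> finite_cylinders"
    unfolding finite_cylinders_def by blast
  then show "C \<in> sigma_sets UNIV finite_cylinders"
    by (rule sigma_sets.Basic)
next
  fix C :: "(int ^ 'm \<Rightarrow> 'b) set"
  assume "C \<in> finite_cylinders"
  then have "C \<in> sets cyl_sigma"
    by (auto simp: finite_cylinders_def)
  then show "C \<in> sigma_sets UNIV {{T. T x = a} | x a. True}"
    by (simp add: sets_cyl_sigma)
qed

lemma vimage_comp_cylinder:
  "(\<lambda>T. \<phi> \<circ> T) -` cylinder F p = (\<Union>q\<in>PiE F (\<lambda>x. \<phi> -` {p x}). cylinder F q)"
proof (intro set_eqI iffI)
  fix T
  assume "T \<in> (\<lambda>T. \<phi> \<circ> T) -` cylinder F p"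
  then have "restrict T F \<in> PiE F (\<lambda>x. \<phi> -` {p x})" "T \<in> cylinder F (restrict T F)"
    by (auto simp: cylinder_def)
  then show "T \<in> (\<Union>q\<in>PiE F (\<lambda>x. \<phi> -` {p x}). cylinder F q)"
    by blast
qed (auto simp: cylinder_def)

lemma disjoint_family_on_cylinder: "disjoint_family_on (cylinder F) (PiE F S)"
  unfolding disjoint_family_on_def
proof (intro ballI impI)
  fix q1 q2
  assume "q1 \<in> PiE F S" "q2 \<in> PiE F S" "q1 \<noteq> q2"
  then obtain x where "x \<in> F" "q1 x \<noteq> q2 x"
    using PiE_ext[of q1 F S q2] by blast
  then show "cylinder F q1 \<inter> cylinder F q2 = {}"
    by (auto simp: cylinder_def)
qed

lemma measurable_comp_left:
  fixes \<phi> :: "'b \<Rightarrow> 'c"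
  assumes "\<And>c. finite (\<phi> -` {c})"
  shows "(\<lambda>T :: int ^ 'm \<Rightarrow> 'b. \<phi> \<circ> T) \<in> measurable cyl_sigma cyl_sigma"
proof (rule measurable_cyl_sigmaI)
  fix x :: "int ^ 'm" and a :: 'c
  have "(\<lambda>T. \<phi> \<circ> T) -` {T. T x = a} = (\<Union>b\<in>\<phi> -` {a}. {T. T x = b})"
    by auto
  then show "(\<lambda>T. \<phi> \<circ> T) -` {T. T x = a} \<in> sets cyl_sigma"
    using assms by (simp add: sets.finite_UN)
qed

section \<open>Letter maps and substitutions\<close>

lemma finite_vimage_apfst:
  fixes h :: "'a::finite \<Rightarrow> 'c"
  shows "finite (apfst h -` {c} :: ('a \<times> 'b) set)"
  by (rule finite_subset[of _ "UNIV \<times> {snd c}"]) auto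

lemma factor_map_eq_comp: "factor_map chr T = apfst chr \<circ> T"
  by (simp add: factor_map_def apfst_def map_prod_def fun_eq_iff split_beta)

lemma factor_map_shift: "factor_map chr (shift j T) = shift j (factor_map chr T)"
  by (simp add: factor_map_def shift_def)

text \<open>The \<open>SOME\<close> in \<^const>\<open>subst_patch\<close> depends only on where the patch is defined, which
  mapping its letters does not change; so both sides make the same choice.\<close>
lemma subst_patch_map_hom:
  assumes hom: "\<And>a b. h (gop a b) = gop' (h a) (h b)"
  shows "subst_patch Q D gop' (\<lambda>d d'. h (W d d')) (\<lambda>y. map_option (apfst h) (P y))
       = (\<lambda>y. map_option (apfst h) (subst_patch Q D gop W P y))"
proof
  fix y
  let ?pos = "\<lambda>xd. snd xd \<in> D \<and> y = Q *v fst xd + snd xd \<and> P (fst xd) \<noteq> None"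
  show "subst_patch Q D gop' (\<lambda>d d'. h (W d d')) (\<lambda>y. map_option (apfst h) (P y)) y
      = map_option (apfst h) (subst_patch Q D gop W P y)"
  proof (cases "\<exists>xd. ?pos xd")
    case True
    then have "?pos (SOME xd. ?pos xd)"
      by (rule someI_ex)
    with True show ?thesis
      by (auto simp: subst_patch_def subst_letter_def Let_def hom)
  next
    case False
    then show ?thesis
      by (auto simp: subst_patch_def)
  qed
qed

lemma supertile_map_hom:
  assumes "\<And>a b. h (gop a b) = gop' (h a) (h b)"
  shows "supertile Q D gop' (\<lambda>d d'. h (W d d')) n (apfst h l)
       = (\<lambda>y. map_option (apfst h) (supertile Q D gop W n l y))"
proof (induction n)
  case 0
  then show ?case
    by (auto simp: supertile_def)
next
  case (Suc n)
  then show ?case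
    using subst_patch_map_hom[of h gop gop' Q D W "supertile Q D gop W n l", OF assms]
    by (simp add: supertile_def)
qed

lemma subshift_in_cyl_sigma:
  assumes "countable A"
  shows "subshift Q D gop W A \<in> sets cyl_sigma"
proof -
  let ?st = "supertile Q D gop W"
  define E where "E a b n l k = {T. \<forall>x\<in>rect a b. ?st n l (x + k) = Some (T x)}" for a b n l k
  have E_in: "E a b n l k \<in> sets cyl_sigma" for a b n l k
  proof (cases "\<forall>x\<in>rect a b. ?st n l (x + k) \<noteq> None")
    case True
    then have "E a b n l k = cylinder (rect a b) (\<lambda>x. the (?st n l (x + k)))"
      by (force simp: E_def cylinder_def)
    then show ?thesis
      by simp
  next
    case False
    then have "E a b n l k = {}"
      by (force simp: E_def)
    then show ?thesis
      by simp
  qed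
  have "countable (A \<times> D)"
    using assms by simp
  then have "(\<Union>n. \<Union>l\<in>A \<times> D. \<Union>k. E a b n l k) \<in> sets cyl_sigma" for a b
    by (intro sets.countable_UN'' E_in) auto
  then have "(\<Inter>a. \<Inter>b. \<Union>n. \<Union>l\<in>A \<times> D. \<Union>k. E a b n l k) \<in> sets cyl_sigma"
    by (intro sets.countable_INT'') auto
  moreover have "subshift Q D gop W A = (\<Inter>a. \<Inter>b. \<Union>n. \<Union>l\<in>A \<times> D. \<Union>k. E a b n l k)"
    by (simp add: subshift_def E_def set_eq_iff Bex_def)
  ultimately show ?thesis
    by simp
qed

definition window_lifts ::
  "('b \<Rightarrow> 'c) \<Rightarrow> (int ^ 'm \<Rightarrow> 'b option) set \<Rightarrow> (int ^ 'm \<Rightarrow> 'c) \<Rightarrow> nat \<Rightarrow> (int ^ 'm \<Rightarrow> 'b) set"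
where
  "window_lifts \<phi> P T' N =
     {q \<in> PiE (box N) (\<lambda>x. \<phi> -` {T' x}). \<exists>\<pi>\<in>P. \<forall>x\<in>box N. \<pi> x = Some (q x)}"

lemma finite_window_lifts:
  assumes "\<And>c. finite (\<phi> -` {c})"
  shows "finite (window_lifts \<phi> P T' N)"
proof (rule finite_subset)
  show "window_lifts \<phi> P T' N \<subseteq> PiE (box N) (\<lambda>x. \<phi> -` {T' x})"
    by (auto simp: window_lifts_def)
  show "finite (PiE (box N) (\<lambda>x. \<phi> -` {T' x}))"
    by (intro finite_PiE finite_box assms)
qed

lemma window_lifts_nonempty:
  assumes "\<pi> \<in> P" "\<forall>x\<in>box N. map_option \<phi> (\<pi> x) = Some (T' x)"
  shows "window_lifts \<phi> P T' N \<noteq> {}"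
proof -
  have "\<forall>x\<in>box N. \<pi> x = Some (the (\<pi> x)) \<and> \<phi> (the (\<pi> x)) = T' x"
    using assms(2) by auto
  with \<open>\<pi> \<in> P\<close> have "restrict (\<lambda>x. the (\<pi> x)) (box N) \<in> window_lifts \<phi> P T' N"
    unfolding window_lifts_def restrict_PiE_iff by auto
  then show ?thesis
    by blast
qed

lemma restrict_window_lifts:
  assumes "N \<le> M" "q \<in> window_lifts \<phi> P T' M"
  shows "restrict q (box N) \<in> window_lifts \<phi> P T' N"
proof -
  from \<open>q \<in> window_lifts \<phi> P T' M\<close> obtain \<pi> where "\<pi> \<in> P" "\<forall>x\<in>box M. \<pi> x = Some (q x)"
    and "q \<in> PiE (box M) (\<lambda>x. \<phi> -` {T' x})"
    unfolding window_lifts_def by blast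
  with box_mono[OF \<open>N \<le> M\<close>] show ?thesis
    unfolding window_lifts_def restrict_PiE_iff by (auto dest: PiE_mem)
qed

lemma lift_along_comp_left:
  fixes \<phi> :: "'b \<Rightarrow> 'c" and P :: "(int ^ 'm \<Rightarrow> 'b option) set"
  assumes fibres: "\<And>c. finite (\<phi> -` {c})"
    and windows: "\<And>N. \<exists>\<pi>\<in>P. \<forall>x\<in>box N. map_option \<phi> (\<pi> x) = Some (T' x)"
  shows "\<exists>T. \<phi> \<circ> T = T' \<and> (\<forall>N. \<exists>\<pi>\<in>P. \<forall>x\<in>box N. \<pi> x = Some (T x))"
proof -
  have "\<exists>t. \<forall>N. restrict t (box N) \<in> window_lifts \<phi> P T' N"
  proof (rule koenig_restrict)
    show "mono (box :: nat \<Rightarrow> (int ^ 'm) set)"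
      by (rule monoI) (rule box_mono)
    show "finite (window_lifts \<phi> P T' N)" for N
      by (rule finite_window_lifts[OF fibres])
    show "window_lifts \<phi> P T' N \<noteq> {}" for N
      using windows[of N] window_lifts_nonempty by blast
    show "restrict q (box N) \<in> window_lifts \<phi> P T' N"
      if "N \<le> M" "q \<in> window_lifts \<phi> P T' M" for N M q
      using that by (rule restrict_window_lifts)
  qed
  then obtain t where t: "\<And>N. restrict t (box N) \<in> window_lifts \<phi> P T' N"
    by blast
  have "\<phi> (t x) = T' x" for x
  proof -
    obtain N where "x \<in> box N"
      using ex_in_box by blast
    moreover have "restrict t (box N) \<in> PiE (box N) (\<lambda>x. \<phi> -` {T' x})"
      using t[of N] by (simp add: window_lifts_def)
    ultimately show ?thesis
      by (auto dest: PiE_mem)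
  qed
  moreover have "\<exists>\<pi>\<in>P. \<forall>x\<in>box N. \<pi> x = Some (t x)" for N
    using t[of N] by (simp add: window_lifts_def)
  ultimately show ?thesis
    by (intro exI[of _ t]) auto
qed

lemma image_subshift_map_hom_subset:
  fixes W :: "int ^ 'm \<Rightarrow> int ^ 'm \<Rightarrow> 'a"
  assumes hom: "\<And>a b. h (gop a b) = gop' (h a) (h b)" and A': "h ` A \<subseteq> A'"
  shows "(\<lambda>T. apfst h \<circ> T) ` subshift Q D gop W A \<subseteq> subshift Q D gop' (\<lambda>d d'. h (W d d')) A'"
proof
  fix T'
  assume "T' \<in> (\<lambda>T. apfst h \<circ> T) ` subshift Q D gop W A"
  then obtain T where T: "T \<in> subshift Q D gop W A" and T': "T' = apfst h \<circ> T"
    by blast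
  show "T' \<in> subshift Q D gop' (\<lambda>d d'. h (W d d')) A'"
    unfolding subshift_def
  proof (intro CollectI allI)
    fix a b :: "int ^ 'm"
    obtain n l k where l: "l \<in> A \<times> D"
      and win: "\<forall>x\<in>rect a b. supertile Q D gop W n l (x + k) = Some (T x)"
      using T unfolding subshift_def by blast
    have "apfst h l \<in> A' \<times> D"
      using l A' by (cases l) auto
    moreover have "\<forall>x\<in>rect a b. supertile Q D gop' (\<lambda>d d'. h (W d d')) n (apfst h l) (x + k) = Some (T' x)"
      using win T' by (simp add: supertile_map_hom[of h gop gop', OF hom])
    ultimately show "\<exists>n l k. l \<in> A' \<times> D \<and>
        (\<forall>x\<in>rect a b. supertile Q D gop' (\<lambda>d d'. h (W d d')) n l (x + k) = Some (T' x))"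
      by (intro exI[of _ n] exI[of _ "apfst h l"] exI[of _ k] conjI)
  qed
qed

lemma subshift_subset_image_map_hom:
  fixes h :: "'a::finite \<Rightarrow> 'c" and W :: "int ^ 'm \<Rightarrow> int ^ 'm \<Rightarrow> 'a"
  assumes hom: "\<And>a b. h (gop a b) = gop' (h a) (h b)" and A': "A' \<subseteq> h ` A"
  shows "subshift Q D gop' (\<lambda>d d'. h (W d d')) A' \<subseteq> (\<lambda>T. apfst h \<circ> T) ` subshift Q D gop W A"
proof
  fix T'
  assume T': "T' \<in> subshift Q D gop' (\<lambda>d d'. h (W d d')) A'"
  let ?P = "{\<lambda>x. supertile Q D gop W n l (x + k) | n l k. l \<in> A \<times> D}"
  have "\<exists>\<pi>\<in>?P. \<forall>x\<in>box N. map_option (apfst h) (\<pi> x) = Some (T' x)" for N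
  proof -
    obtain n l' k where l': "l' \<in> A' \<times> D"
      and win: "\<forall>x\<in>box N. supertile Q D gop' (\<lambda>d d'. h (W d d')) n l' (x + k) = Some (T' x)"
      using T' unfolding subshift_def box_eq_rect by blast
    obtain l where "l \<in> A \<times> D" "l' = apfst h l"
      using l' A' by (cases l') (auto simp: apfst_def map_prod_def)
    with win have "\<forall>x\<in>box N. map_option (apfst h) (supertile Q D gop W n l (x + k)) = Some (T' x)"
      by (simp add: supertile_map_hom[of h gop gop', OF hom])
    with \<open>l \<in> A \<times> D\<close> show ?thesis
      by (intro bexI[of _ "\<lambda>x. supertile Q D gop W n l (x + k)"]) blast+
  qed
  from lift_along_comp_left[OF finite_vimage_apfst this]
  obtain T where "apfst h \<circ> T = T'" and T: "\<And>N. \<exists>\<pi>\<in>?P. \<forall>x\<in>box N. \<pi> x = Some (T x)"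
    by blast
  moreover have "T \<in> subshift Q D gop W A"
    unfolding subshift_def
  proof (intro CollectI allI)
    fix a b :: "int ^ 'm"
    obtain N where N: "rect a b \<subseteq> box N"
      using rect_subset_box by blast
    obtain n l k where "l \<in> A \<times> D" and "\<forall>x\<in>box N. supertile Q D gop W n l (x + k) = Some (T x)"
      using T[of N] by blast
    with N show "\<exists>n l k. l \<in> A \<times> D \<and> (\<forall>x\<in>rect a b. supertile Q D gop W n l (x + k) = Some (T x))"
      by blast
  qed
  ultimately show "T' \<in> (\<lambda>T. apfst h \<circ> T) ` subshift Q D gop W A"
    by blast
qed

lemma image_subshift_map_hom:
  fixes h :: "'a::finite \<Rightarrow> 'c" and W :: "int ^ 'm \<Rightarrow> int ^ 'm \<Rightarrow> 'a"
  assumes "\<And>a b. h (gop a b) = gop' (h a) (h b)" "h ` A = A'"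
  shows "(\<lambda>T. apfst h \<circ> T) ` subshift Q D gop W A = subshift Q D gop' (\<lambda>d d'. h (W d d')) A'"
proof (rule equalityI)
  show "(\<lambda>T. apfst h \<circ> T) ` subshift Q D gop W A \<subseteq> subshift Q D gop' (\<lambda>d d'. h (W d d')) A'"
    by (rule image_subshift_map_hom_subset[of h gop gop']) (use assms in auto)
  show "subshift Q D gop' (\<lambda>d d'. h (W d d')) A' \<subseteq> (\<lambda>T. apfst h \<circ> T) ` subshift Q D gop W A"
    by (rule subshift_subset_image_map_hom[of h gop gop']) (use assms in auto)
qed

section \<open>Frequency measures\<close>

lemma is_freq_measure_sets: "is_freq_measure Sig \<mu> \<Longrightarrow> sets \<mu> = sets cyl_sigma"
  by (simp add: is_freq_measure_def)

lemma is_freq_measure_prob_space: "is_freq_measure Sig \<mu> \<Longrightarrow> prob_space \<mu>"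
  by (simp add: is_freq_measure_def)

lemma is_freq_measure_tendsto:
  fixes T :: "int ^ 'm \<Rightarrow> 'b"
  assumes "is_freq_measure Sig \<mu>" "finite F" "T \<in> Sig"
  shows "(\<lambda>N. real (card {j \<in> box N. shift j T \<in> cylinder F p}) / real (card (box N :: (int ^ 'm) set)))
          \<longlonglongrightarrow> measure \<mu> (cylinder F p)"
  using assms(1)[unfolded is_freq_measure_def, THEN conjunct2, THEN conjunct2, THEN conjunct2,
      rule_format, OF assms(2,3), of p]
  by (simp add: cylinder_def shift_def)

lemma is_freq_measure_nonempty:
  assumes "is_freq_measure Sig \<mu>"
  shows "Sig \<noteq> {}"
proof
  assume "Sig = {}"
  then have "AE T in \<mu>. False"
    using assms by (simp add: is_freq_measure_def)
  then show False
    using prob_space.AE_False[OF is_freq_measure_prob_space[OF assms]] by simp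
qed

lemma measurable_freq_measure:
  "is_freq_measure Sig \<mu> \<Longrightarrow> measurable \<mu> N = measurable cyl_sigma N"
  by (rule measurable_cong_sets) (simp_all add: is_freq_measure_sets)

lemma space_freq_measure: "is_freq_measure Sig \<mu> \<Longrightarrow> space \<mu> = UNIV"
  using sets_eq_imp_space_eq[OF is_freq_measure_sets] by simp

lemma measure_vimage_shift_cylinder:
  fixes \<mu> :: "(int ^ 'm \<Rightarrow> 'b) measure"
  assumes fm: "is_freq_measure Sig \<mu>" and F: "finite F"
  shows "measure \<mu> (shift j -` cylinder F p) = measure \<mu> (cylinder F p)"
proof -
  obtain T where T: "T \<in> Sig"
    using is_freq_measure_nonempty[OF fm] by blast
  let ?C = "cylinder F p"
  define freq where "freq P N = real (card {i\<in>box N. P i}) / real (card (box N :: (int ^ 'm) set))"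
    for P :: "int ^ 'm \<Rightarrow> bool" and N
  have unshifted: "freq (\<lambda>i. shift i T \<in> ?C) \<longlonglongrightarrow> measure \<mu> ?C"
    unfolding freq_def by (rule is_freq_measure_tendsto[OF fm F T])
  have "freq (\<lambda>i. shift i T \<in> shift j -` ?C) \<longlonglongrightarrow> measure \<mu> (shift j -` ?C)"
    unfolding freq_def vimage_shift_cylinder by (rule is_freq_measure_tendsto[OF fm _ T]) (use F in simp)
  then have shifted: "freq (\<lambda>i. shift (i + j) T \<in> ?C) \<longlonglongrightarrow> measure \<mu> (shift j -` ?C)"
    by (simp add: shift_shift)
  have "(\<lambda>N. freq (\<lambda>i. shift (i + j) T \<in> ?C) N - freq (\<lambda>i. shift i T \<in> ?C) N) \<longlonglongrightarrow> 0"
    unfolding freq_def by (rule box_translate_freq_diff_tendsto_0)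
  from tendsto_add[OF this unshifted]
  have "freq (\<lambda>i. shift (i + j) T \<in> ?C) \<longlonglongrightarrow> measure \<mu> ?C"
    by simp
  with shifted show ?thesis
    by (rule LIMSEQ_unique)
qed

lemma distr_shift_freq_measure:
  fixes \<mu> :: "(int ^ 'm \<Rightarrow> 'b) measure"
  assumes fm: "is_freq_measure Sig \<mu>"
  shows "distr \<mu> cyl_sigma (shift j) = \<mu>"
proof (rule measure_eqI_generator_eq[OF Int_stable_finite_cylinders, where \<Omega>=UNIV and A="\<lambda>_. UNIV"])
  interpret prob_space \<mu>
    using fm by (rule is_freq_measure_prob_space)
  have shift_meas: "shift j \<in> measurable \<mu> cyl_sigma"
    by (simp add: measurable_freq_measure[OF fm])
  have "cylinder {} (\<lambda>_. undefined) \<in> finite_cylinders"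
    unfolding finite_cylinders_def by blast
  then have UNIV_in: "UNIV \<in> finite_cylinders"
    by (simp add: cylinder_def)
  show "finite_cylinders \<subseteq> Pow UNIV"
    by simp
  show "sets (distr \<mu> cyl_sigma (shift j)) = sigma_sets UNIV finite_cylinders"
    "sets \<mu> = sigma_sets UNIV finite_cylinders"
    by (simp_all add: is_freq_measure_sets[OF fm] sets_cyl_sigma_finite_cylinders)
  show "range (\<lambda>_. UNIV) \<subseteq> finite_cylinders" "(\<Union>i::nat. UNIV) = UNIV"
    using UNIV_in by auto
  have "emeasure (distr \<mu> cyl_sigma (shift j)) UNIV = emeasure \<mu> (space \<mu>)"
    using emeasure_distr[OF shift_meas UNIV_in_cyl_sigma] by (simp add: space_freq_measure[OF fm])
  then show "emeasure (distr \<mu> cyl_sigma (shift j)) UNIV \<noteq> \<infinity>"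
    by simp
  show "emeasure (distr \<mu> cyl_sigma (shift j)) C = emeasure \<mu> C" if "C \<in> finite_cylinders" for C
  proof (cases "C = {}")
    case False
    with that have "C \<in> {cylinder F p | F p. finite F}"
      by (simp add: finite_cylinders_def)
    then obtain F p where F: "finite F" and C: "C = cylinder F p"
      by blast
    have "emeasure (distr \<mu> cyl_sigma (shift j)) C = emeasure \<mu> (shift j -` C)"
      using emeasure_distr[OF shift_meas cylinder_in_cyl_sigma[OF F]] C
      by (simp add: space_freq_measure[OF fm])
    also have "\<dots> = emeasure \<mu> C"
      using measure_vimage_shift_cylinder[OF fm F] unfolding C by (simp add: emeasure_eq_measure)
    finally show ?thesis .
  qed simp
qed

lemma AE_shift_freq_measure:
  fixes \<mu> :: "(int ^ 'm \<Rightarrow> 'b) measure"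
  assumes fm: "is_freq_measure Sig \<mu>" and "AE T in \<mu>. P T"
  shows "AE T in \<mu>. P (shift j T)"
proof -
  have "shift j \<in> measurable \<mu> cyl_sigma"
    by (simp add: measurable_freq_measure[OF fm])
  moreover have "AE T in distr \<mu> cyl_sigma (shift j). P T"
    unfolding distr_shift_freq_measure[OF fm] by fact
  ultimately show ?thesis
    by (rule AE_distrD)
qed

lemma card_shift_in_vimage_comp_cylinder:
  fixes T :: "int ^ 'm \<Rightarrow> 'b"
  assumes "finite F" "\<And>c. finite (\<phi> -` {c})"
  shows "card {j\<in>box N. \<phi> \<circ> shift j T \<in> cylinder F p}
       = (\<Sum>q\<in>PiE F (\<lambda>x. \<phi> -` {p x}). card {j\<in>box N. shift j T \<in> cylinder F q})"
proof -
  let ?Q = "PiE F (\<lambda>x. \<phi> -` {p x})"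
  have "{j\<in>box N. \<phi> \<circ> shift j T \<in> cylinder F p} = (\<Union>q\<in>?Q. {j\<in>box N. shift j T \<in> cylinder F q})"
    using vimage_comp_cylinder[of \<phi> F p] by blast
  also have "card \<dots> = (\<Sum>q\<in>?Q. card {j\<in>box N. shift j T \<in> cylinder F q})"
  proof (rule card_UN_disjoint)
    show "finite ?Q"
      using assms by (intro finite_PiE)
    show "\<forall>q\<in>?Q. finite {j\<in>box N. shift j T \<in> cylinder F q}"
      by simp
    show "\<forall>q1\<in>?Q. \<forall>q2\<in>?Q. q1 \<noteq> q2 \<longrightarrow>
        {j\<in>box N. shift j T \<in> cylinder F q1} \<inter> {j\<in>box N. shift j T \<in> cylinder F q2} = {}"
      using disjoint_family_on_cylinder[of F] unfolding disjoint_family_on_def by blast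
  qed
  finally show ?thesis .
qed

lemma measure_vimage_comp_cylinder:
  fixes \<mu> :: "(int ^ 'm \<Rightarrow> 'b) measure"
  assumes "finite_measure \<mu>" "sets \<mu> = sets cyl_sigma" "finite F" "\<And>c. finite (\<phi> -` {c})"
  shows "measure \<mu> ((\<lambda>T. \<phi> \<circ> T) -` cylinder F p)
       = (\<Sum>q\<in>PiE F (\<lambda>x. \<phi> -` {p x}). measure \<mu> (cylinder F q))"
  unfolding vimage_comp_cylinder
proof (rule measure_finite_Union)
  show "finite (PiE F (\<lambda>x. \<phi> -` {p x}))"
    using assms by (intro finite_PiE)
  show "cylinder F ` PiE F (\<lambda>x. \<phi> -` {p x}) \<subseteq> sets \<mu>"
    using assms(2,3) by auto
  show "disjoint_family_on (cylinder F) (PiE F (\<lambda>x. \<phi> -` {p x}))"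
    by (rule disjoint_family_on_cylinder)
  show "emeasure \<mu> (cylinder F q) \<noteq> \<infinity>" for q
    using assms(1) by (simp add: finite_measure.emeasure_finite)
qed

lemma tendsto_freq_comp_left:
  fixes \<phi> :: "'b \<Rightarrow> 'c" and T :: "int ^ 'm \<Rightarrow> 'b"
  assumes fm: "is_freq_measure Sig \<mu>" and fibres: "\<And>c. finite (\<phi> -` {c})"
    and T: "T \<in> Sig" and F: "finite F"
  shows "(\<lambda>N. real (card {j \<in> box N. shift j (\<phi> \<circ> T) \<in> cylinder F p}) / real (card (box N :: (int ^ 'm) set)))
      \<longlonglongrightarrow> measure \<mu> ((\<lambda>T. \<phi> \<circ> T) -` cylinder F p)"
proof -
  interpret prob_space \<mu>
    using fm by (rule is_freq_measure_prob_space)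
  let ?Q = "PiE F (\<lambda>x. \<phi> -` {p x})"
  have "shift j (\<phi> \<circ> T) = \<phi> \<circ> shift j T" for j
    by (simp add: shift_def comp_def)
  then have "(\<lambda>N. real (card {j \<in> box N. shift j (\<phi> \<circ> T) \<in> cylinder F p}) / real (card (box N :: (int ^ 'm) set)))
      = (\<lambda>N. \<Sum>q\<in>?Q. real (card {j \<in> box N. shift j T \<in> cylinder F q}) / real (card (box N :: (int ^ 'm) set)))"
    by (simp add: card_shift_in_vimage_comp_cylinder[OF F fibres] sum_divide_distrib)
  also have "\<dots> \<longlonglongrightarrow> (\<Sum>q\<in>?Q. measure \<mu> (cylinder F q))"
    by (intro tendsto_sum is_freq_measure_tendsto[OF fm F T])
  also have "(\<Sum>q\<in>?Q. measure \<mu> (cylinder F q)) = measure \<mu> ((\<lambda>T. \<phi> \<circ> T) -` cylinder F p)"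
    using measure_vimage_comp_cylinder[OF finite_measure_axioms is_freq_measure_sets[OF fm] F fibres]
    by simp
  finally show ?thesis .
qed

lemma is_freq_measure_distr_comp_left:
  fixes \<phi> :: "'b \<Rightarrow> 'c" and \<mu> :: "(int ^ 'm \<Rightarrow> 'b) measure"
  assumes fm: "is_freq_measure Sig \<mu>" and fibres: "\<And>c. finite (\<phi> -` {c})"
    and image: "(\<lambda>T. \<phi> \<circ> T) ` Sig = Sig'" and Sig': "Sig' \<in> sets cyl_sigma"
  shows "is_freq_measure Sig' (distr \<mu> cyl_sigma (\<lambda>T. \<phi> \<circ> T))"
proof -
  let ?\<Phi> = "\<lambda>T :: int ^ 'm \<Rightarrow> 'b. \<phi> \<circ> T"
  interpret prob_space \<mu>
    using fm by (rule is_freq_measure_prob_space)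
  have \<Phi>: "?\<Phi> \<in> measurable \<mu> cyl_sigma"
    using measurable_comp_left[OF fibres] by (simp add: measurable_freq_measure[OF fm])
  have "AE T in \<mu>. T \<in> Sig"
    using fm by (simp add: is_freq_measure_def)
  then have "AE T in \<mu>. ?\<Phi> T \<in> Sig'"
    by (rule AE_mp) (use image in blast)
  then have AE: "AE T in distr \<mu> cyl_sigma ?\<Phi>. T \<in> Sig'"
    using AE_distr_iff[OF \<Phi>, of "\<lambda>T. T \<in> Sig'"] Sig' by simp
  have freq: "(\<lambda>N. real (card {j \<in> box N. shift j T' \<in> cylinder F p}) / real (card (box N :: (int ^ 'm) set)))
      \<longlonglongrightarrow> measure (distr \<mu> cyl_sigma ?\<Phi>) (cylinder F p)"
    if F: "finite F" and T': "T' \<in> Sig'" for F p T'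
  proof -
    obtain T where T: "T \<in> Sig" and T': "T' = ?\<Phi> T"
      using image T' by blast
    have "measure \<mu> (?\<Phi> -` cylinder F p) = measure (distr \<mu> cyl_sigma ?\<Phi>) (cylinder F p)"
      using measure_distr[OF \<Phi> cylinder_in_cyl_sigma[OF F]] by (simp add: space_freq_measure[OF fm])
    with tendsto_freq_comp_left[OF fm fibres T F, of p] show ?thesis
      by (simp add: T')
  qed
  show ?thesis
    unfolding is_freq_measure_def
  proof (intro conjI allI impI)
    show "sets (distr \<mu> cyl_sigma ?\<Phi>) = sets cyl_sigma" "prob_space (distr \<mu> cyl_sigma ?\<Phi>)"
      by (simp_all add: prob_space_distr[OF \<Phi>])
    show "AE T in distr \<mu> cyl_sigma ?\<Phi>. T \<in> Sig'"
      by (fact AE)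
  next
    fix F :: "(int ^ 'm) set" and p T' :: "int ^ 'm \<Rightarrow> 'c"
    assume "finite F" "T' \<in> Sig'"
    with freq show "(\<lambda>N. real (card {j \<in> box N. \<forall>x\<in>F. T' (x + j) = p x}) / real (card (box N :: (int ^ 'm) set)))
        \<longlonglongrightarrow> measure (distr \<mu> cyl_sigma ?\<Phi>) {T. \<forall>x\<in>F. T x = p x}"
      by (simp add: cylinder_def shift_def)
  qed
qed

section \<open>Spectral measures on the factor\<close>

lemma integrable_sq_norm_diff_bounded:
  assumes "finite_measure M" "L2 M f" "g \<in> borel_measurable M" "\<And>x. cmod (g x) \<le> B"
  shows "integrable M (\<lambda>x. (cmod (f x - g x))\<^sup>2)"
proof (rule Bochner_Integration.integrable_bound)
  show "integrable M (\<lambda>x. 2 * (cmod (f x))\<^sup>2 + 2 * B\<^sup>2)"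
    using assms(1,2) by (simp add: L2_def finite_measure.integrable_const)
  have "f \<in> borel_measurable M"
    using assms(2) by (simp add: L2_def)
  with assms(3) show "(\<lambda>x. (cmod (f x - g x))\<^sup>2) \<in> borel_measurable M"
    by measurable
  show "AE x in M. norm ((cmod (f x - g x))\<^sup>2) \<le> norm (2 * (cmod (f x))\<^sup>2 + 2 * B\<^sup>2)"
  proof (rule AE_I2)
    fix x
    have "cmod (f x - g x) \<le> cmod (f x) + B"
      using norm_triangle_ineq4[of "f x" "g x"] assms(4)[of x] by linarith
    then have "(cmod (f x - g x))\<^sup>2 \<le> (cmod (f x) + B)\<^sup>2"
      by (simp add: power_mono)
    also have "\<dots> \<le> 2 * (cmod (f x))\<^sup>2 + 2 * B\<^sup>2"
      using sum_squares_bound[of "cmod (f x)" B] by (simp add: power2_sum)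
    finally show "norm ((cmod (f x - g x))\<^sup>2) \<le> norm (2 * (cmod (f x))\<^sup>2 + 2 * B\<^sup>2)"
      by simp
  qed
qed

lemma AE_eq_comp_of_L2_approx:
  fixes f :: "'a \<Rightarrow> complex" and h :: "nat \<Rightarrow> 'c \<Rightarrow> complex"
  assumes \<phi>: "\<phi> \<in> measurable M N" and h: "\<And>n. h n \<in> borel_measurable N"
    and int: "\<And>n. integrable M (\<lambda>x. (cmod (f x - h n (\<phi> x)))\<^sup>2)"
    and lim: "(\<lambda>n. \<integral>x. (cmod (f x - h n (\<phi> x)))\<^sup>2 \<partial>M) \<longlonglongrightarrow> 0"
  shows "\<exists>g \<in> borel_measurable N. AE x in M. f x = g (\<phi> x)"
proof -
  obtain r :: "nat \<Rightarrow> nat" where "strict_mono r"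
    and AE_lim: "AE x in M. (\<lambda>n. (cmod (f x - h (r n) (\<phi> x)))\<^sup>2) \<longlonglongrightarrow> 0"
    using tendsto_L1_AE_subseq[of M "\<lambda>n x. (cmod (f x - h n (\<phi> x)))\<^sup>2"] int lim by auto
  define g where "g y = lim (\<lambda>n. h (r n) y)" for y
  have "g \<in> borel_measurable N"
    unfolding g_def by (rule borel_measurable_lim_metric) (rule h)
  moreover have "AE x in M. f x = g (\<phi> x)"
    using AE_lim
  proof eventually_elim
    case (elim x)
    then have "(\<lambda>n. sqrt ((cmod (f x - h (r n) (\<phi> x)))\<^sup>2)) \<longlonglongrightarrow> sqrt 0"
      by (rule tendsto_real_sqrt)
    then have "(\<lambda>n. f x - h (r n) (\<phi> x)) \<longlonglongrightarrow> 0"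
      by (simp add: tendsto_norm_zero_iff)
    from tendsto_diff[OF tendsto_const[of "f x"] this]
    have "(\<lambda>n. h (r n) (\<phi> x)) \<longlonglongrightarrow> f x"
      by simp
    then show ?case
      by (simp add: g_def limI)
  qed
  ultimately show ?thesis
    by blast
qed

text \<open>A finite sum of indicators: on the uncountable factor alphabet only finitely-valued
  functions of a coordinate are evidently measurable for the cylinder \<open>\<sigma>\<close>-algebra.\<close>
definition fchi_factor ::
  "('g \<Rightarrow> complex) \<Rightarrow> int ^ 'm \<Rightarrow> int ^ 'm \<Rightarrow> (int ^ 'm \<Rightarrow> complex \<times> (int ^ 'm)) \<Rightarrow> complex" where
  "fchi_factor chr d j T' = (\<Sum>z\<in>range chr. z * indicator {T'. T' j = (z, d)} T')"

lemma borel_measurable_fchi_factor: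
  fixes chr :: "'g::finite \<Rightarrow> complex"
  shows "fchi_factor chr d j \<in> borel_measurable cyl_sigma"
  unfolding fchi_factor_def by measurable

lemma fchi_factor_factor_map:
  fixes chr :: "'g::finite \<Rightarrow> complex"
  shows "fchi_factor chr d j (factor_map chr T) = fchi chr d (shift j T)"
proof -
  have "fchi_factor chr d j (factor_map chr T)
      = (\<Sum>z\<in>range chr. if z = chr (fst (T j)) then (if snd (T j) = d then z else 0) else 0)"
    unfolding fchi_factor_def by (intro sum.cong refl) (auto simp: factor_map_def indicator_def)
  also have "\<dots> = fchi chr d (shift j T)"
    by (simp add: fchi_def shift_def)
  finally show ?thesis .
qed

lemma Hchi_approximating_sequence:
  assumes "f \<in> Hchi \<mu> chr D"
  obtains S c where
    "\<And>n. (\<integral>T. (cmod (f T - (\<Sum>jd\<in>S n. c n jd * fchi chr (snd jd) (shift (fst jd) T))))\<^sup>2 \<partial>\<mu>)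
      < inverse (real (Suc n))"
proof -
  have "\<forall>e>0. \<exists>S c. finite S \<and> S \<subseteq> UNIV \<times> D \<and>
      (\<integral>T. (cmod (f T - (\<Sum>jd\<in>S. c jd * fchi chr (snd jd) (shift (fst jd) T))))\<^sup>2 \<partial>\<mu>) < e"
    using assms by (simp add: Hchi_def)
  then have "\<forall>n. \<exists>S c. (\<integral>T. (cmod (f T - (\<Sum>jd\<in>S. c jd * fchi chr (snd jd) (shift (fst jd) T))))\<^sup>2 \<partial>\<mu>)
      < inverse (real (Suc n))"
    by (meson inverse_positive_iff_positive of_nat_0_less_iff zero_less_Suc)
  then show thesis
    unfolding choice_iff using that by blast
qed

lemma Hchi_AE_eq_comp_factor_map:
  fixes \<mu> :: "(int ^ 'm \<Rightarrow> 'g::{finite, ab_group_add} \<times> (int ^ 'm)) measure"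
  assumes fm: "is_freq_measure Sig \<mu>" and chr: "character chr" and f: "f \<in> Hchi \<mu> chr D"
  shows "\<exists>g \<in> borel_measurable cyl_sigma. AE T in \<mu>. f T = g (factor_map chr T)"
proof -
  obtain S c where
    approx: "\<And>n. (\<integral>T. (cmod (f T - (\<Sum>jd\<in>S n. c n jd * fchi chr (snd jd) (shift (fst jd) T))))\<^sup>2 \<partial>\<mu>)
      < inverse (real (Suc n))"
    using Hchi_approximating_sequence[OF f] by blast
  define h where "h n T' = (\<Sum>jd\<in>S n. c n jd * fchi_factor chr (snd jd) (fst jd) T')" for n T'
  have h_factor: "h n (factor_map chr T) = (\<Sum>jd\<in>S n. c n jd * fchi chr (snd jd) (shift (fst jd) T))" for n T
    by (simp add: h_def fchi_factor_factor_map)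
  have h_meas: "h n \<in> borel_measurable cyl_sigma" for n
    unfolding h_def by (intro borel_measurable_sum borel_measurable_times borel_measurable_const
        borel_measurable_fchi_factor)
  have factor_meas: "factor_map chr \<in> measurable \<mu> cyl_sigma"
    using measurable_comp_left[OF finite_vimage_apfst]
    by (simp add: measurable_freq_measure[OF fm] factor_map_eq_comp[abs_def])
  show ?thesis
  proof (rule AE_eq_comp_of_L2_approx[OF factor_meas h_meas])
    show "integrable \<mu> (\<lambda>T. (cmod (f T - h n (factor_map chr T)))\<^sup>2)" for n
    proof (rule integrable_sq_norm_diff_bounded)
      show "finite_measure \<mu>"
        using is_freq_measure_prob_space[OF fm] by (simp add: prob_space_def)
      show "L2 \<mu> f"
        using f by (simp add: Hchi_def)
      show "(\<lambda>T. h n (factor_map chr T)) \<in> borel_measurable \<mu>"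
        using factor_meas h_meas by measurable
      have fchi_le: "cmod (fchi chr d T') \<le> 1" for d and T' :: "int ^ 'm \<Rightarrow> 'g \<times> (int ^ 'm)"
        using chr by (simp add: fchi_def character_def)
      show "cmod (h n (factor_map chr T)) \<le> (\<Sum>jd\<in>S n. cmod (c n jd))" for T
        unfolding h_factor
        by (intro order_trans[OF norm_sum] sum_mono) (simp add: norm_mult mult_left_le[OF fchi_le])
    qed
    show "(\<lambda>n. \<integral>T. (cmod (f T - h n (factor_map chr T)))\<^sup>2 \<partial>\<mu>) \<longlonglongrightarrow> 0"
    proof (rule tendsto_sandwich[OF _ _ tendsto_const LIMSEQ_inverse_real_of_nat])
      show "\<forall>\<^sub>F n in sequentially. 0 \<le> (\<integral>T. (cmod (f T - h n (factor_map chr T)))\<^sup>2 \<partial>\<mu>)"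
        by simp
      show "\<forall>\<^sub>F n in sequentially. (\<integral>T. (cmod (f T - h n (factor_map chr T)))\<^sup>2 \<partial>\<mu>)
          \<le> inverse (real (Suc n))"
        using approx by (simp add: h_factor less_imp_le)
    qed
  qed
qed

lemma L2_distr:
  assumes \<phi>: "\<phi> \<in> measurable M N" and g: "g \<in> borel_measurable N"
    and fg: "AE x in M. f x = g (\<phi> x)" and f: "L2 M f"
  shows "L2 (distr M N \<phi>) g"
  unfolding L2_def
proof
  show "g \<in> borel_measurable (distr M N \<phi>)"
    using g by simp
  have "integrable M (\<lambda>x. (cmod (g (\<phi> x)))\<^sup>2)"
  proof (rule integrable_cong_AE[THEN iffD1])
    show "integrable M (\<lambda>x. (cmod (f x))\<^sup>2)" "(\<lambda>x. (cmod (f x))\<^sup>2) \<in> borel_measurable M"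
      using f by (auto simp: L2_def)
    show "(\<lambda>x. (cmod (g (\<phi> x)))\<^sup>2) \<in> borel_measurable M"
      using \<phi> g by measurable
    show "AE x in M. (cmod (f x))\<^sup>2 = (cmod (g (\<phi> x)))\<^sup>2"
      using fg by eventually_elim simp
  qed
  then show "integrable (distr M N \<phi>) (\<lambda>x. (cmod (g x))\<^sup>2)"
    using g by (simp add: integrable_distr_eq[OF \<phi>])
qed

lemma borel_measurable_cnj [measurable (raw)]:
  assumes "f \<in> borel_measurable M"
  shows "(\<lambda>x. cnj (f x)) \<in> borel_measurable M"
proof -
  have "cnj \<in> borel_measurable borel"
    by (rule borel_measurable_continuous_onI) (intro continuous_intros)
  with assms show ?thesis
    by (rule measurable_compose)
qed

lemma spectral_measure_distr:
  fixes \<mu> :: "(int ^ 'm \<Rightarrow> 'b) measure" and \<Phi> :: "(int ^ 'm \<Rightarrow> 'b) \<Rightarrow> int ^ 'm \<Rightarrow> 'c"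
  assumes fm: "is_freq_measure Sig \<mu>" and \<Phi>: "\<Phi> \<in> measurable cyl_sigma cyl_sigma"
    and \<Phi>_shift: "\<And>j T. \<Phi> (shift j T) = shift j (\<Phi> T)"
    and g: "g \<in> borel_measurable cyl_sigma" and f: "f \<in> borel_measurable \<mu>"
    and fg: "AE T in \<mu>. f T = g (\<Phi> T)" and \<sigma>: "spectral_measure \<mu> f \<sigma>"
  shows "spectral_measure (distr \<mu> cyl_sigma \<Phi>) g \<sigma>"
  unfolding spectral_measure_def
proof (intro conjI allI)
  show "sets \<sigma> = sets borel" "finite_measure \<sigma>" "emeasure \<sigma> (UNIV - torus) = 0"
    using \<sigma> by (simp_all add: spectral_measure_def)
  fix j
  have \<Phi>_\<mu>: "\<Phi> \<in> measurable \<mu> cyl_sigma"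
    using \<Phi> by (simp add: measurable_freq_measure[OF fm])
  have corr_meas: "(\<lambda>T'. g (shift j T') * cnj (g T')) \<in> borel_measurable cyl_sigma"
    using g by measurable
  have "(\<integral>T'. g (shift j T') * cnj (g T') \<partial>distr \<mu> cyl_sigma \<Phi>)
      = (\<integral>T. g (shift j (\<Phi> T)) * cnj (g (\<Phi> T)) \<partial>\<mu>)"
    by (rule integral_distr[OF \<Phi>_\<mu> corr_meas])
  also have "\<dots> = (\<integral>T. f (shift j T) * cnj (f T) \<partial>\<mu>)"
  proof (rule integral_cong_AE)
    show "(\<lambda>T. g (shift j (\<Phi> T)) * cnj (g (\<Phi> T))) \<in> borel_measurable \<mu>"
      using \<Phi>_\<mu> corr_meas by measurable
    have "shift j \<in> measurable \<mu> \<mu>"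
      by (simp add: measurable_freq_measure[OF fm] measurable_cong_sets[OF refl is_freq_measure_sets[OF fm]])
    then show "(\<lambda>T. f (shift j T) * cnj (f T)) \<in> borel_measurable \<mu>"
      using f by measurable
    have "AE T in \<mu>. f (shift j T) = g (\<Phi> (shift j T))"
      by (rule AE_shift_freq_measure[OF fm fg])
    with fg show "AE T in \<mu>. g (shift j (\<Phi> T)) * cnj (g (\<Phi> T)) = f (shift j T) * cnj (f T)"
      by eventually_elim (simp add: \<Phi>_shift)
  qed
  also have "\<dots> = (\<integral>z. zpow z j \<partial>\<sigma>)"
    using \<sigma> by (simp add: spectral_measure_def)
  finally show "(\<integral>T'. g (shift j T') * cnj (g T') \<partial>distr \<mu> cyl_sigma \<Phi>) = (\<integral>z. zpow z j \<partial>\<sigma>)" .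
qed

lemma absolutely_continuous_Hchi_factor:
  fixes \<mu> :: "(int ^ 'm \<Rightarrow> 'g::{finite, ab_group_add} \<times> (int ^ 'm)) measure"
  assumes fm: "is_freq_measure Sig \<mu>" and chr: "character chr" and f: "f \<in> Hchi \<mu> chr D"
    and \<sigma>: "spectral_measure \<mu> f \<sigma>" and \<nu>: "max_spectral_type (distr \<mu> cyl_sigma (factor_map chr)) \<nu>"
  shows "absolutely_continuous \<nu> \<sigma>"
proof -
  have factor_meas: "factor_map chr \<in> measurable cyl_sigma cyl_sigma"
    unfolding factor_map_eq_comp[abs_def] by (rule measurable_comp_left[OF finite_vimage_apfst])
  obtain g where g: "g \<in> borel_measurable cyl_sigma" and fg: "AE T in \<mu>. f T = g (factor_map chr T)"
    using Hchi_AE_eq_comp_factor_map[OF fm chr f] by blast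
  have "L2 \<mu> f"
    using f by (simp add: Hchi_def)
  have factor_meas': "factor_map chr \<in> measurable \<mu> cyl_sigma"
    using factor_meas by (simp add: measurable_freq_measure[OF fm])
  have "L2 (distr \<mu> cyl_sigma (factor_map chr)) g"
  proof (rule L2_distr)
    show "factor_map chr \<in> measurable \<mu> cyl_sigma"
      by (fact factor_meas')
    show "g \<in> borel_measurable cyl_sigma"
      by (fact g)
    show "AE T in \<mu>. f T = g (factor_map chr T)"
      by (fact fg)
    show "L2 \<mu> f"
      by fact
  qed
  moreover have "spectral_measure (distr \<mu> cyl_sigma (factor_map chr)) g \<sigma>"
    using spectral_measure_distr[OF fm factor_meas factor_map_shift g _ fg \<sigma>] \<open>L2 \<mu> f\<close>
    by (simp add: L2_def)
  ultimately show ?thesis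
    using \<nu> by (simp add: max_spectral_type_def)
qed

theorem proposition4p6:
  fixes Q :: "int ^ 'm ^ 'm"
    and D :: "(int ^ 'm) set"
    and W :: "int ^ 'm \<Rightarrow> int ^ 'm \<Rightarrow> 'g::{ab_group_add, finite}"
    and \<mu> :: "(int ^ 'm \<Rightarrow> 'g \<times> (int ^ 'm)) measure"
    and chr :: "'g \<Rightarrow> complex"
  assumes "expansive Q"
    and "coset_reps Q D"
    and "primitive D (+) W UNIV"
    and "aperiodic_set (subshift Q D (+) W UNIV)"
    and "is_freq_measure (subshift Q D (+) W UNIV) \<mu>"
    and "character chr"
  shows "factor_map chr ` subshift Q D (+) W UNIV
           = subshift Q D (*) (\<lambda>d d'. chr (W d d')) (range chr)
       \<and> (\<forall>(j::int ^ 'm) (T::int ^ 'm \<Rightarrow> 'g \<times> (int ^ 'm)). factor_map chr (shift j T) = shift j (factor_map chr T))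
       \<and> factor_map chr \<in> measurable cyl_sigma cyl_sigma
       \<and> is_freq_measure (subshift Q D (*) (\<lambda>d d'. chr (W d d')) (range chr))
                         (distr \<mu> cyl_sigma (factor_map chr))
       \<and> (\<forall>f \<in> Hchi \<mu> chr D. \<forall>\<sigma> \<nu>. spectral_measure \<mu> f \<sigma> \<longrightarrow>
            max_spectral_type (distr \<mu> cyl_sigma (factor_map chr)) \<nu> \<longrightarrow>
            absolutely_continuous \<nu> \<sigma>)"
proof -
  have hom: "\<And>a b. chr (a + b) = chr a * chr b"
    using \<open>character chr\<close> by (simp add: character_def)
  note factor_map = factor_map_eq_comp[abs_def]
  have image: "factor_map chr ` subshift Q D (+) W UNIV = subshift Q D (*) (\<lambda>d d'. chr (W d d')) (range chr)"
    unfolding factor_map by (rule image_subshift_map_hom[of chr "(+)" "(*)", OF hom]) simp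
  have measurable: "factor_map chr \<in> measurable cyl_sigma cyl_sigma"
    unfolding factor_map by (rule measurable_comp_left[OF finite_vimage_apfst])
  have "is_freq_measure (subshift Q D (*) (\<lambda>d d'. chr (W d d')) (range chr)) (distr \<mu> cyl_sigma (factor_map chr))"
    unfolding factor_map
    by (rule is_freq_measure_distr_comp_left[OF \<open>is_freq_measure _ \<mu>\<close> finite_vimage_apfst
          image[unfolded factor_map] subshift_in_cyl_sigma]) simp
  with image measurable show ?thesis
    using absolutely_continuous_Hchi_factor[OF \<open>is_freq_measure _ \<mu>\<close> \<open>character chr\<close>]
    by (simp add: factor_map_shift)
qed

end
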